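(* Let $(X,x)$ be a pointed diffeological space and let $A$ be a $D$-open subset of $X$ containing $x$, equipped with the sub-diffeology of $X$. Then the inclusion $A\hookrightarrow X$ induces an isomorphism $\hat{T}_x(A)\cong\hat{T}_x(X)$.
   Context: A diffeological space is a set $X$ together with, for every open subset $U$ of every $\mathbb{R}^n$, a set of functions $U\to X$ called plots, such that constant maps are plots, the composite of a plot with a smooth map between open subsets of Euclidean spaces is a plot, and a function which is locally a plot is a plot; smooth maps send plots to plots. A subset of $X$ is $D$-open if its preimage under every plot is open; the sub-diffeology on a subset consists of maps whose composite with the inclusion is a plot. For a diffeological space $B$, $C^\infty(B,\mathbb{R})$ carries the functional diffeology (a map $U\to C^\infty(B,\mathbb{R})$ is a plot iff its adjoint $U\times B\to\mathbb{R}$ is smooth). $G_x(X)=\operatorname{colim}_B C^\infty(B,\mathbb{R})$ (colimit in diffeological spaces over $D$-open $B\ni x$ with sub-diffeology, along restrictions) is the diffeological algebra of germs at $x$. The external tangent space $\hat{T}_x(X)$ is the vector space of smooth linear maps $F:G_x(X)\to\mathbb{R}$ with $F([f][g])=F([f])g(x)+f(x)F([g])$. A smooth pointed map $h:(X,x)\to(Y,y)$ induces $h_*:\hat T_x(X)\to\hat T_y(Y)$, $h_*(F)([g])=F([g\circ h])$. *)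

theory Defs
  imports "HOL-Analysis.Analysis"
begin

text \<open>Euclidean space R^n is represented as the set of real sequences vanishing from
  index n on, with the (product) topology of nat => real, which restricts to the usual
  topology on this set.\<close>

definition Eucl :: "nat \<Rightarrow> (nat \<Rightarrow> real) set" where
  "Eucl n = {v. \<forall>i\<ge>n. v i = 0}"

definition open_dom :: "nat \<Rightarrow> (nat \<Rightarrow> real) set \<Rightarrow> bool" where
  "open_dom n U \<longleftrightarrow> U \<subseteq> Eucl n \<and> openin (top_of_set (Eucl n)) U"

fun Ck :: "nat \<Rightarrow> nat \<Rightarrow> (nat \<Rightarrow> real) set \<Rightarrow> ((nat \<Rightarrow> real) \<Rightarrow> real) \<Rightarrow> bool" where
  "Ck n 0 U f = continuous_on U f"
| "Ck n (Suc k) U f = (continuous_on U f \<and>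
     (\<forall>i<n. \<exists>g. (\<forall>v\<in>U. ((\<lambda>t. f (v(i := v i + t))) has_real_derivative g v) (at 0))
                 \<and> Ck n k U g))"

definition smooth_fun :: "nat \<Rightarrow> (nat \<Rightarrow> real) set \<Rightarrow> ((nat \<Rightarrow> real) \<Rightarrow> real) \<Rightarrow> bool" where
  "smooth_fun n U f \<longleftrightarrow> (\<forall>k. Ck n k U f)"

definition smooth_map :: "nat \<Rightarrow> nat \<Rightarrow> (nat \<Rightarrow> real) set \<Rightarrow> (nat \<Rightarrow> real) set
    \<Rightarrow> ((nat \<Rightarrow> real) \<Rightarrow> (nat \<Rightarrow> real)) \<Rightarrow> bool" where
  "smooth_map m n V U q \<longleftrightarrow> q ` V \<subseteq> U \<and> U \<subseteq> Eucl n \<and> (\<forall>j<n. smooth_fun m V (\<lambda>v. q v j))"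

type_synonym 'a plots = "nat \<Rightarrow> (nat \<Rightarrow> real) set \<Rightarrow> ((nat \<Rightarrow> real) \<Rightarrow> 'a) \<Rightarrow> bool"

text \<open>D n U p: p restricted to U is a plot U -> X (U open in R^n). Plots are
  identified with their restriction to U (extensionality axiom).\<close>
definition diffeology :: "'a set \<Rightarrow> 'a plots \<Rightarrow> bool" where
  "diffeology X D \<longleftrightarrow>
     (\<forall>n U p. D n U p \<longrightarrow> open_dom n U \<and> p ` U \<subseteq> X) \<and>
     (\<forall>n U p q. D n U p \<and> (\<forall>u\<in>U. q u = p u) \<longrightarrow> D n U q) \<and>
     (\<forall>n U c. open_dom n U \<and> c \<in> X \<longrightarrow> D n U (\<lambda>_. c)) \<and>
     (\<forall>n m U V p f. D m V p \<and> open_dom n U \<and> smooth_map n m U V f \<longrightarrow> D n U (p \<circ> f)) \<and>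
     (\<forall>n U p. open_dom n U \<and> p ` U \<subseteq> X \<and>
        (\<forall>u\<in>U. \<exists>W. open_dom n W \<and> u \<in> W \<and> W \<subseteq> U \<and> D n W p) \<longrightarrow> D n U p)"

definition D_open :: "'a set \<Rightarrow> 'a plots \<Rightarrow> 'a set \<Rightarrow> bool" where
  "D_open X D A \<longleftrightarrow> A \<subseteq> X \<and> (\<forall>n U p. D n U p \<longrightarrow> openin (top_of_set U) (U \<inter> p -` A))"

definition sub_diffeology :: "'a plots \<Rightarrow> 'a set \<Rightarrow> 'a plots" where
  "sub_diffeology D A = (\<lambda>n U p. D n U p \<and> p ` U \<subseteq> A)"

definition smooth_on :: "'a plots \<Rightarrow> 'a set \<Rightarrow> ('a \<Rightarrow> real) \<Rightarrow> bool" where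
  "smooth_on D B f \<longleftrightarrow> (\<forall>n U p. D n U p \<and> p ` U \<subseteq> B \<longrightarrow> smooth_fun n U (f \<circ> p))"

definition Cinf :: "'a plots \<Rightarrow> 'a set \<Rightarrow> ('a \<Rightarrow> real) set" where
  "Cinf D B = {f \<in> extensional B. smooth_on D B f}"

text \<open>functional diffeology: the adjoint U x B -> R is smooth (product diffeology)\<close>
definition Cinf_plot :: "'a plots \<Rightarrow> 'a set \<Rightarrow> nat \<Rightarrow> (nat \<Rightarrow> real) set
    \<Rightarrow> ((nat \<Rightarrow> real) \<Rightarrow> 'a \<Rightarrow> real) \<Rightarrow> bool" where
  "Cinf_plot D B n U P \<longleftrightarrow> open_dom n U \<and> P ` U \<subseteq> Cinf D B \<and>
     (\<forall>m V q r. open_dom m V \<and> smooth_map m n V U q \<and> D m V r \<and> r ` V \<subseteq> B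
        \<longrightarrow> smooth_fun m V (\<lambda>v. P (q v) (r v)))"

definition germ :: "'a set \<Rightarrow> 'a plots \<Rightarrow> 'a \<Rightarrow> 'a set \<Rightarrow> ('a \<Rightarrow> real)
    \<Rightarrow> ('a set \<times> ('a \<Rightarrow> real)) set" where
  "germ X D x B f = {(B', g). D_open X D B' \<and> x \<in> B' \<and> g \<in> Cinf D B' \<and>
     (\<exists>B''. D_open X D B'' \<and> x \<in> B'' \<and> B'' \<subseteq> B \<inter> B' \<and> (\<forall>y\<in>B''. f y = g y))}"

definition germs :: "'a set \<Rightarrow> 'a plots \<Rightarrow> 'a \<Rightarrow> ('a set \<times> ('a \<Rightarrow> real)) set set" where
  "germs X D x = {germ X D x B f | B f. D_open X D B \<and> x \<in> B \<and> f \<in> Cinf D B}"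

text \<open>colimit (final) diffeology on the germs\<close>
definition germ_plot :: "'a set \<Rightarrow> 'a plots \<Rightarrow> 'a \<Rightarrow> nat \<Rightarrow> (nat \<Rightarrow> real) set
    \<Rightarrow> ((nat \<Rightarrow> real) \<Rightarrow> ('a set \<times> ('a \<Rightarrow> real)) set) \<Rightarrow> bool" where
  "germ_plot X D x n U P \<longleftrightarrow> open_dom n U \<and> P ` U \<subseteq> germs X D x \<and>
     (\<forall>u\<in>U. \<exists>W B Q. open_dom n W \<and> u \<in> W \<and> W \<subseteq> U \<and> D_open X D B \<and> x \<in> B \<and>
        Cinf_plot D B n W Q \<and> (\<forall>w\<in>W. P w = germ X D x B (Q w)))"

text \<open>external tangent space: smooth linear derivations G_x(X) -> R
  (functions set to 0 outside G_x(X)); the algebra operations on germs are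
  computed on representatives over a common D-open domain.\<close>
definition ext_tangent :: "'a set \<Rightarrow> 'a plots \<Rightarrow> 'a
    \<Rightarrow> (('a set \<times> ('a \<Rightarrow> real)) set \<Rightarrow> real) set" where
  "ext_tangent X D x = {F.
     (\<forall>\<gamma>. \<gamma> \<notin> germs X D x \<longrightarrow> F \<gamma> = 0) \<and>
     (\<forall>n U P. germ_plot X D x n U P \<longrightarrow> smooth_fun n U (F \<circ> P)) \<and>
     (\<forall>B f g a b. D_open X D B \<and> x \<in> B \<and> f \<in> Cinf D B \<and> g \<in> Cinf D B \<longrightarrow>
        F (germ X D x B (\<lambda>y. a * f y + b * g y))
          = a * F (germ X D x B f) + b * F (germ X D x B g) \<and>
        F (germ X D x B (\<lambda>y. f y * g y))
          = F (germ X D x B f) * g x + f x * F (germ X D x B g))}"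

text \<open>h_*(F)([g]) = F([g o h]), g represented by any element of the germ class\<close>
definition pushfwd :: "'a set \<Rightarrow> 'a plots \<Rightarrow> 'a \<Rightarrow> 'b set \<Rightarrow> 'b plots \<Rightarrow> ('a \<Rightarrow> 'b)
    \<Rightarrow> (('a set \<times> ('a \<Rightarrow> real)) set \<Rightarrow> real)
    \<Rightarrow> (('b set \<times> ('b \<Rightarrow> real)) set \<Rightarrow> real)" where
  "pushfwd X D x Y E h F = (\<lambda>\<gamma>. if \<gamma> \<in> germs Y E (h x)
      then (case SOME p. p \<in> \<gamma> of (B, g) \<Rightarrow> F (germ X D x (X \<inter> h -` B) (g \<circ> h)))
      else 0)"

end

theory Submission
  imports Defs
begin

text \<open>A germ at \<open>x\<close> only depends on the behaviour of a function on arbitrarily small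
  D-open neighbourhoods of \<open>x\<close>. Since \<open>A\<close> is D-open, the D-open subsets of \<open>A\<close> (for the
  sub-diffeology) are exactly the D-open subsets of \<open>X\<close> contained in \<open>A\<close>, carrying the same
  smooth functions. Hence restriction of germs \<open>G\<^sub>x(X) \<rightarrow> G\<^sub>x(A)\<close> and the inclusion
  \<open>G\<^sub>x(A) \<rightarrow> G\<^sub>x(X)\<close> are mutually inverse, both preserve plots of germs and the algebra
  operations, and the pushforward along \<open>A \<hookrightarrow> X\<close> is precomposition with the restriction;
  precomposition with the inclusion inverts it.\<close>

lemma eventually_update_in_open_dom:
  assumes "open_dom n U" "v \<in> U" "i < n"
  shows "eventually (\<lambda>t::real. v(i := v i + t) \<in> U) (at 0)"
proof -
  from assms(1) obtain S where S: "open S" "U = Eucl n \<inter> S"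
    using openin_open[of "Eucl n" U] unfolding open_dom_def by blast
  have "continuous_on UNIV (\<lambda>t::real. v(i := v i + t))"
    by (rule continuous_on_coordinatewise_then_product, rename_tac k, case_tac "k = i")
      (simp_all add: continuous_on_add)
  hence "isCont (\<lambda>t::real. v(i := v i + t)) 0"
    by (simp add: continuous_on_eq_continuous_at)
  hence "((\<lambda>t::real. v(i := v i + t)) \<longlongrightarrow> v) (at 0)"
    by (simp add: isCont_def)
  hence "eventually (\<lambda>t::real. v(i := v i + t) \<in> S) (at 0)"
    using S assms(2) by (intro topological_tendstoD) auto
  moreover have "v(i := v i + t) \<in> Eucl n" for t
    using assms S by (auto simp: Eucl_def)
  ultimately show ?thesis
    using S(2) by (auto elim: eventually_mono)
qed

lemma Ck_cong:
  assumes "open_dom n U" "\<forall>u\<in>U. f u = g u" "Ck n k U f"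
  shows "Ck n k U g"
  using assms(2,3)
proof (induction k arbitrary: f g)
  case 0
  thus ?case using continuous_on_cong by auto
next
  case (Suc k)
  have "\<exists>h. (\<forall>v\<in>U. ((\<lambda>t. g (v(i := v i + t))) has_real_derivative h v) (at 0)) \<and> Ck n k U h"
    if i: "i < n" for i
  proof -
    from Suc.prems i obtain h
      where h: "\<forall>v\<in>U. ((\<lambda>t. f (v(i := v i + t))) has_real_derivative h v) (at 0)" "Ck n k U h"
      by auto
    have "((\<lambda>t. g (v(i := v i + t))) has_real_derivative h v) (at 0)" if v: "v \<in> U" for v
    proof -
      have near: "eventually (\<lambda>t. f (v(i := v i + t)) = g (v(i := v i + t))) (at 0)"
        using eventually_update_in_open_dom[OF assms(1) v i] Suc.prems by (auto elim: eventually_mono)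
      have "f (v(i := v i + 0)) = g (v(i := v i + 0))"
        using v Suc.prems by simp
      thus ?thesis
        using h(1) v has_field_derivative_cong_eventually[OF near] by auto
    qed
    thus ?thesis using h(2) by blast
  qed
  moreover have "continuous_on U g"
    using Suc.prems continuous_on_cong by auto
  ultimately show ?case by simp
qed

lemma smooth_fun_cong:
  "open_dom n U \<Longrightarrow> \<forall>u\<in>U. f u = g u \<Longrightarrow> smooth_fun n U f \<Longrightarrow> smooth_fun n U g"
  unfolding smooth_fun_def using Ck_cong by blast

lemma Ck_const: "Ck n k U (\<lambda>_. c)"
  by (induction k arbitrary: c) (auto intro!: exI[of _ "\<lambda>_. 0"])

lemma Ck_coordinate: "Ck n k U (\<lambda>v. v j)"
proof (cases k)
  case 0
  thus ?thesis by (auto intro: continuous_on_subset[OF continuous_on_product_coordinates])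
next
  case (Suc k')
  have "((\<lambda>t. (v(i := v i + t)) j) has_real_derivative (if i = j then 1 else 0)) (at 0)" for v i
    by (cases "i = j") (auto intro!: derivative_eq_intros)
  hence "\<exists>g. (\<forall>v\<in>U. ((\<lambda>t. (v(i := v i + t)) j) has_real_derivative g v) (at 0)) \<and> Ck n k' U g"
    for i
    using Ck_const[of n k' U "if i = j then 1 else 0"]
    by (intro exI[of _ "\<lambda>_. if i = j then 1 else 0"]) blast
  thus ?thesis
    using Suc by (simp add: continuous_on_subset[OF continuous_on_product_coordinates])
qed

lemma diffeology_plotD: "diffeology X D \<Longrightarrow> D n U p \<Longrightarrow> open_dom n U \<and> p ` U \<subseteq> X"
  unfolding diffeology_def by (drule conjunct1) blast

lemma diffeology_plot_comp:
  "diffeology X D \<Longrightarrow> D m V p \<Longrightarrow> open_dom n U \<Longrightarrow> smooth_map n m U V f \<Longrightarrow> D n U (p \<circ> f)"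
  unfolding diffeology_def by (drule conjunct2, drule conjunct2, drule conjunct2, drule conjunct1) blast

lemma diffeology_plot_restrict:
  assumes "diffeology X D" "D n U p" "open_dom n W" "W \<subseteq> U"
  shows "D n W p"
proof -
  have "U \<subseteq> Eucl n"
    using diffeology_plotD[OF assms(1), OF assms(2)] by (simp add: open_dom_def)
  hence "smooth_map n n W U id"
    unfolding smooth_map_def smooth_fun_def using assms(4) Ck_coordinate by simp
  thus ?thesis
    using diffeology_plot_comp[OF assms(1), OF assms(2,3), where f = id] by simp
qed

lemma D_open_Int:
  assumes "D_open X D B\<^sub>1" "D_open X D B\<^sub>2"
  shows "D_open X D (B\<^sub>1 \<inter> B\<^sub>2)"
  unfolding D_open_def
proof (intro conjI allI impI)
  show "B\<^sub>1 \<inter> B\<^sub>2 \<subseteq> X"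
    using assms unfolding D_open_def by blast
  fix n U p
  assume "D n U p"
  hence "openin (top_of_set U) ((U \<inter> p -` B\<^sub>1) \<inter> (U \<inter> p -` B\<^sub>2))"
    using assms unfolding D_open_def by blast
  moreover have "(U \<inter> p -` B\<^sub>1) \<inter> (U \<inter> p -` B\<^sub>2) = U \<inter> p -` (B\<^sub>1 \<inter> B\<^sub>2)"
    by blast
  ultimately show "openin (top_of_set U) (U \<inter> p -` (B\<^sub>1 \<inter> B\<^sub>2))"
    by simp
qed

text \<open>The nontrivial direction restricts a plot of \<open>X\<close> to the open preimage of \<open>A\<close>,
  which is a plot of the sub-diffeology.\<close>

lemma D_open_sub_diffeology_iff:
  assumes "diffeology X D" "D_open X D A" "B \<subseteq> A"
  shows "D_open A (sub_diffeology D A) B \<longleftrightarrow> D_open X D B"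
proof
  assume B: "D_open A (sub_diffeology D A) B"
  show "D_open X D B"
    unfolding D_open_def
  proof (intro conjI allI impI)
    show "B \<subseteq> X"
      using assms unfolding D_open_def by blast
    fix n U p
    assume p: "D n U p"
    define W where "W = U \<inter> p -` A"
    have W: "openin (top_of_set U) W"
      using assms(2) p unfolding D_open_def W_def by blast
    have "open_dom n U"
      using diffeology_plotD[OF assms(1), OF p] by simp
    hence "open_dom n W"
      using W openin_trans openin_subset unfolding open_dom_def
      by (metis dual_order.trans topspace_euclidean_subtopology)
    moreover have "W \<subseteq> U"
      unfolding W_def by blast
    ultimately have "D n W p"
      by (rule diffeology_plot_restrict[OF assms(1), OF p])
    hence "sub_diffeology D A n W p"
      unfolding sub_diffeology_def W_def by blast
    hence "openin (top_of_set W) (W \<inter> p -` B)"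
      using B unfolding D_open_def by blast
    hence "openin (top_of_set U) (W \<inter> p -` B)"
      using W openin_trans by blast
    moreover have "W \<inter> p -` B = U \<inter> p -` B"
      using assms(3) W_def by blast
    ultimately show "openin (top_of_set U) (U \<inter> p -` B)"
      by simp
  qed
next
  assume "D_open X D B"
  thus "D_open A (sub_diffeology D A) B"
    using assms(3) unfolding D_open_def sub_diffeology_def by blast
qed

lemma Cinf_restrict:
  assumes "diffeology X D" "f \<in> Cinf D B" "C \<subseteq> B"
  shows "restrict f C \<in> Cinf D C"
  unfolding Cinf_def smooth_on_def
proof (intro CollectI conjI allI impI)
  show "restrict f C \<in> extensional C"
    by simp
  fix n U p
  assume p: "D n U p \<and> p ` U \<subseteq> C"
  hence "smooth_fun n U (f \<circ> p)"
    using assms(2,3) unfolding Cinf_def smooth_on_def by blast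
  moreover have "open_dom n U"
    using p diffeology_plotD[OF assms(1), of n U p] by simp
  moreover have "\<forall>u\<in>U. (f \<circ> p) u = (restrict f C \<circ> p) u"
    using p by auto
  ultimately show "smooth_fun n U (restrict f C \<circ> p)"
    using smooth_fun_cong by blast
qed

lemma Cinf_sub_diffeology: "B \<subseteq> A \<Longrightarrow> Cinf (sub_diffeology D A) B = Cinf D B"
  unfolding Cinf_def smooth_on_def sub_diffeology_def by blast

lemma germ_cong_subset:
  assumes "D_open X D C" "x \<in> C" "C \<subseteq> B" "C \<subseteq> B'" "\<forall>y\<in>C. f y = f' y"
  shows "germ X D x B f \<subseteq> germ X D x B' f'"
proof
  fix p
  assume "p \<in> germ X D x B f"
  then obtain B\<^sub>1 g B'' where p: "p = (B\<^sub>1, g)" "D_open X D B\<^sub>1" "x \<in> B\<^sub>1" "g \<in> Cinf D B\<^sub>1"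
    "D_open X D B''" "x \<in> B''" "B'' \<subseteq> B \<inter> B\<^sub>1" "\<forall>y\<in>B''. f y = g y"
    unfolding germ_def by blast
  have "D_open X D (C \<inter> B'')"
    using D_open_Int assms(1) p(5) by blast
  moreover have "C \<inter> B'' \<subseteq> B' \<inter> B\<^sub>1" "x \<in> C \<inter> B''" "\<forall>y\<in>C \<inter> B''. f' y = g y"
    using assms p by auto
  ultimately show "p \<in> germ X D x B' f'"
    using p unfolding germ_def by blast
qed

lemma germ_cong:
  assumes "D_open X D C" "x \<in> C" "C \<subseteq> B" "C \<subseteq> B'" "\<forall>y\<in>C. f y = f' y"
  shows "germ X D x B f = germ X D x B' f'"
  using germ_cong_subset[OF assms] germ_cong_subset[of X D C x B' B f' f] assms by auto

lemma germ_self_mem: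
  "D_open X D B \<Longrightarrow> x \<in> B \<Longrightarrow> f \<in> Cinf D B \<Longrightarrow> (B, f) \<in> germ X D x B f"
  unfolding germ_def by blast

lemma germ_memD:
  assumes "(B\<^sub>1, g) \<in> germ X D x B f"
  obtains C where "D_open X D C" "x \<in> C" "C \<subseteq> B \<inter> B\<^sub>1" "\<forall>y\<in>C. f y = g y"
  using assms unfolding germ_def by blast

lemma germsE:
  assumes "\<gamma> \<in> germs X D x"
  obtains B f where "\<gamma> = germ X D x B f" "D_open X D B" "x \<in> B" "f \<in> Cinf D B"
  using assms unfolding germs_def by blast

lemma some_mem_germ:
  assumes "\<gamma> \<in> germs X D x"
  shows "(SOME p. p \<in> \<gamma>) \<in> \<gamma>"
proof -
  from assms obtain B f where "\<gamma> = germ X D x B f" "D_open X D B" "x \<in> B" "f \<in> Cinf D B"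
    by (rule germsE)
  hence "(B, f) \<in> \<gamma>"
    using germ_self_mem[of X D B x f] by simp
  thus ?thesis by (rule someI)
qed

lemma empty_notin_germs: "{} \<notin> germs X D x"
proof
  assume "{} \<in> germs X D x"
  then obtain B f where "{} = germ X D x B f" "D_open X D B" "x \<in> B" "f \<in> Cinf D B"
    by (rule germsE)
  thus False
    using germ_self_mem[of X D B x f] by simp
qed

lemma ext_tangent_notin_germs:
  "F \<in> ext_tangent X D x \<Longrightarrow> \<gamma> \<notin> germs X D x \<Longrightarrow> F \<gamma> = 0"
  unfolding ext_tangent_def by simp

lemma ext_tangent_empty: "F \<in> ext_tangent X D x \<Longrightarrow> F {} = 0"
  by (rule ext_tangent_notin_germs[OF _ empty_notin_germs])

lemma ext_tangent_germ_plotD: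
  "F \<in> ext_tangent X D x \<Longrightarrow> germ_plot X D x n U P \<Longrightarrow> smooth_fun n U (F \<circ> P)"
  unfolding ext_tangent_def by simp

lemma ext_tangent_derivationD:
  assumes "F \<in> ext_tangent X D x" "D_open X D B" "x \<in> B" "f \<in> Cinf D B" "g \<in> Cinf D B"
  shows "F (germ X D x B (\<lambda>y. a * f y + b * g y))
          = a * F (germ X D x B f) + b * F (germ X D x B g)"
    and "F (germ X D x B (\<lambda>y. f y * g y))
          = F (germ X D x B f) * g x + f x * F (germ X D x B g)"
  using assms unfolding ext_tangent_def by simp_all

lemma ext_tangentI:
  assumes "\<And>\<gamma>. \<gamma> \<notin> germs X D x \<Longrightarrow> F \<gamma> = 0"
    and "\<And>n U P. germ_plot X D x n U P \<Longrightarrow> smooth_fun n U (F \<circ> P)"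
    and "\<And>B f g a b. D_open X D B \<Longrightarrow> x \<in> B \<Longrightarrow> f \<in> Cinf D B \<Longrightarrow> g \<in> Cinf D B \<Longrightarrow>
        F (germ X D x B (\<lambda>y. a * f y + b * g y))
          = a * F (germ X D x B f) + b * F (germ X D x B g) \<and>
        F (germ X D x B (\<lambda>y. f y * g y))
          = F (germ X D x B f) * g x + f x * F (germ X D x B g)"
  shows "F \<in> ext_tangent X D x"
  unfolding ext_tangent_def using assms by simp

lemma pushfwd_linear:
  "pushfwd X D x Y E h (\<lambda>\<gamma>. a * F \<gamma> + b * F' \<gamma>)
     = (\<lambda>\<gamma>. a * pushfwd X D x Y E h F \<gamma> + b * pushfwd X D x Y E h F' \<gamma>)"
  by (simp add: pushfwd_def fun_eq_iff split: prod.split)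

type_synonym 'a germ_class = "('a set \<times> ('a \<Rightarrow> real)) set"

locale D_open_subspace =
  fixes X :: "'a set" and D :: "'a plots" and A :: "'a set" and x :: 'a
  assumes diffeology: "diffeology X D" and D_open: "D_open X D A" and base_point: "x \<in> A"
begin

abbreviation "DA \<equiv> sub_diffeology D A"

text \<open>\<open>germ_restr\<close> follows the recipe of \<open>pushfwd\<close> for \<open>h = id\<close>, so that the
  pushforward along the inclusion is precomposition with it.\<close>

definition germ_restr :: "'a germ_class \<Rightarrow> 'a germ_class" where
  "germ_restr \<gamma> = (if \<gamma> \<in> germs X D x
     then (case SOME p. p \<in> \<gamma> of (B, g) \<Rightarrow> germ A DA x (A \<inter> B) g) else {})"

definition germ_incl :: "'a germ_class \<Rightarrow> 'a germ_class" where
  "germ_incl \<gamma> = (if \<gamma> \<in> germs A DA x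
     then (case SOME p. p \<in> \<gamma> of (B, g) \<Rightarrow> germ X D x B g) else {})"

lemma germ_restr_notin: "\<gamma> \<notin> germs X D x \<Longrightarrow> germ_restr \<gamma> = {}"
  unfolding germ_restr_def by simp

lemma germ_incl_notin: "\<gamma> \<notin> germs A DA x \<Longrightarrow> germ_incl \<gamma> = {}"
  unfolding germ_incl_def by simp

lemma D_open_subspace_subset: "D_open A DA B \<Longrightarrow> B \<subseteq> A"
  unfolding D_open_def by blast

lemma D_open_subspaceD: "D_open A DA B \<Longrightarrow> D_open X D B"
  using D_open_sub_diffeology_iff[OF diffeology D_open] D_open_subspace_subset by blast

lemma D_open_subspace_Int: "D_open X D B \<Longrightarrow> D_open A DA (A \<inter> B)"
  using D_open_sub_diffeology_iff[OF diffeology D_open, of "A \<inter> B"] D_open_Int[OF D_open]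
  by blast

lemma germ_restr_germ:
  assumes "germ X D x B f \<in> germs X D x"
  shows "germ_restr (germ X D x B f) = germ A DA x (A \<inter> B) f"
proof -
  let ?\<gamma> = "germ X D x B f"
  obtain B\<^sub>1 g where some: "(SOME p. p \<in> ?\<gamma>) = (B\<^sub>1, g)"
    by (cases "SOME p. p \<in> ?\<gamma>") auto
  have "(B\<^sub>1, g) \<in> ?\<gamma>"
    using some_mem_germ[OF assms] some by simp
  then obtain C where C: "D_open X D C" "x \<in> C" "C \<subseteq> B \<inter> B\<^sub>1" "\<forall>y\<in>C. f y = g y"
    by (rule germ_memD)
  have "germ_restr ?\<gamma> = germ A DA x (A \<inter> B\<^sub>1) g"
    using assms some unfolding germ_restr_def by simp
  also have "\<dots> = germ A DA x (A \<inter> B) f"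
    using germ_cong[OF D_open_subspace_Int[OF C(1)], of x "A \<inter> B\<^sub>1" "A \<inter> B" g f] C base_point
    by auto
  finally show ?thesis .
qed

lemma germ_incl_germ:
  assumes "germ A DA x B f \<in> germs A DA x"
  shows "germ_incl (germ A DA x B f) = germ X D x B f"
proof -
  let ?\<gamma> = "germ A DA x B f"
  obtain B\<^sub>1 g where some: "(SOME p. p \<in> ?\<gamma>) = (B\<^sub>1, g)"
    by (cases "SOME p. p \<in> ?\<gamma>") auto
  have "(B\<^sub>1, g) \<in> ?\<gamma>"
    using some_mem_germ[OF assms] some by simp
  then obtain C where C: "D_open A DA C" "x \<in> C" "C \<subseteq> B \<inter> B\<^sub>1" "\<forall>y\<in>C. f y = g y"
    by (rule germ_memD)
  have "germ_incl ?\<gamma> = germ X D x B\<^sub>1 g"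
    using assms some unfolding germ_incl_def by simp
  also have "\<dots> = germ X D x B f"
    using germ_cong[OF D_open_subspaceD[OF C(1)], of x B\<^sub>1 B g f] C by auto
  finally show ?thesis .
qed

lemma germ_restr_in_germs:
  assumes "\<gamma> \<in> germs X D x"
  shows "germ_restr \<gamma> \<in> germs A DA x"
proof -
  from assms obtain B f where B: "\<gamma> = germ X D x B f" "D_open X D B" "x \<in> B" "f \<in> Cinf D B"
    by (rule germsE)
  have "germ_restr \<gamma> = germ A DA x (A \<inter> B) f"
    using germ_restr_germ assms B(1) by simp
  also have "\<dots> = germ A DA x (A \<inter> B) (restrict f (A \<inter> B))"
    by (rule germ_cong[OF D_open_subspace_Int[OF B(2)]]) (use base_point B in auto)
  finally show ?thesis
    using Cinf_restrict[OF diffeology B(4), of "A \<inter> B"] Cinf_sub_diffeology[of "A \<inter> B" A D]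
      D_open_subspace_Int[OF B(2)] base_point B(3)
    unfolding germs_def by blast
qed

lemma germ_incl_in_germs:
  assumes "\<gamma> \<in> germs A DA x"
  shows "germ_incl \<gamma> \<in> germs X D x"
proof -
  from assms obtain B f where B: "\<gamma> = germ A DA x B f" "D_open A DA B" "x \<in> B" "f \<in> Cinf DA B"
    by (rule germsE)
  have "germ_incl \<gamma> = germ X D x B f"
    using germ_incl_germ assms B(1) by simp
  moreover have "f \<in> Cinf D B"
    using B(4) Cinf_sub_diffeology[OF D_open_subspace_subset[OF B(2)]] by simp
  ultimately show ?thesis
    using D_open_subspaceD[OF B(2)] B(3) unfolding germs_def by blast
qed

lemma germ_restr_incl:
  assumes "\<gamma> \<in> germs A DA x"
  shows "germ_restr (germ_incl \<gamma>) = \<gamma>"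
proof -
  from assms obtain B f where B: "\<gamma> = germ A DA x B f" "D_open A DA B"
    by (rule germsE)
  have "germ_incl \<gamma> = germ X D x B f"
    using germ_incl_germ assms B(1) by simp
  hence "germ_restr (germ_incl \<gamma>) = germ A DA x (A \<inter> B) f"
    using germ_restr_germ germ_incl_in_germs[OF assms] by simp
  moreover have "A \<inter> B = B"
    using D_open_subspace_subset[OF B(2)] by blast
  ultimately show ?thesis
    using B(1) by simp
qed

lemma germ_incl_restr:
  assumes "\<gamma> \<in> germs X D x"
  shows "germ_incl (germ_restr \<gamma>) = \<gamma>"
proof -
  from assms obtain B f where B: "\<gamma> = germ X D x B f" "D_open X D B" "x \<in> B"
    by (rule germsE)
  have "germ_restr \<gamma> = germ A DA x (A \<inter> B) f"
    using germ_restr_germ assms B(1) by simp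
  hence "germ_incl (germ_restr \<gamma>) = germ X D x (A \<inter> B) f"
    using germ_incl_germ germ_restr_in_germs[OF assms] by simp
  also have "\<dots> = germ X D x B f"
    by (rule germ_cong[OF D_open_Int[OF D_open B(2)]]) (use base_point B in auto)
  finally show ?thesis
    using B(1) by simp
qed

text \<open>In the next two lemmas \<open>f\<close> is arbitrary, so that they apply to sums and products of
  smooth functions without knowing these to be smooth: if either side is not a germ,
  both sides are sent to \<open>0\<close>.\<close>

lemma ext_tangent_germ_restr:
  assumes F: "F \<in> ext_tangent A DA x" and B: "D_open X D B" "x \<in> B"
  shows "F (germ_restr (germ X D x B f)) = F (germ A DA x (A \<inter> B) f)"
proof (cases "germ X D x B f \<in> germs X D x")
  case True
  thus ?thesis using germ_restr_germ by simp
next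
  case False
  have "germ X D x (A \<inter> B) f = germ X D x B f"
    by (rule germ_cong[OF D_open_Int[OF D_open B(1)]]) (use base_point B in auto)
  hence "germ A DA x (A \<inter> B) f \<notin> germs A DA x"
    using False germ_incl_in_germs germ_incl_germ by metis
  thus ?thesis
    using germ_restr_notin[OF False] ext_tangent_empty[OF F] ext_tangent_notin_germs[OF F]
    by simp
qed

lemma ext_tangent_germ_incl:
  assumes G: "G \<in> ext_tangent X D x" and B: "D_open A DA B" "x \<in> B"
  shows "G (germ_incl (germ A DA x B f)) = G (germ X D x B f)"
proof (cases "germ A DA x B f \<in> germs A DA x")
  case True
  thus ?thesis using germ_incl_germ by simp
next
  case False
  have "A \<inter> B = B"
    using D_open_subspace_subset[OF B(1)] by blast
  hence "germ X D x B f \<notin> germs X D x"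
    using False germ_restr_in_germs germ_restr_germ by metis
  thus ?thesis
    using germ_incl_notin[OF False] ext_tangent_empty[OF G] ext_tangent_notin_germs[OF G]
    by simp
qed

lemma germ_plot_germ_restr:
  assumes P: "germ_plot X D x n U P"
  shows "germ_plot A DA x n U (germ_restr \<circ> P)"
  unfolding germ_plot_def
proof (intro conjI ballI)
  have P: "open_dom n U" "P ` U \<subseteq> germs X D x"
    "\<forall>u\<in>U. \<exists>W B Q. open_dom n W \<and> u \<in> W \<and> W \<subseteq> U \<and> D_open X D B \<and> x \<in> B \<and>
        Cinf_plot D B n W Q \<and> (\<forall>w\<in>W. P w = germ X D x B (Q w))"
    using P unfolding germ_plot_def by simp_all
  show "open_dom n U" by (rule P(1))
  show "(germ_restr \<circ> P) ` U \<subseteq> germs A DA x"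
    using P(2) germ_restr_in_germs by auto
  fix u
  assume "u \<in> U"
  then obtain W B Q where W: "open_dom n W" "u \<in> W" "W \<subseteq> U" "D_open X D B" "x \<in> B"
    "Cinf_plot D B n W Q" "\<forall>w\<in>W. P w = germ X D x B (Q w)"
    using P(3) by blast
  have Q: "Q ` W \<subseteq> Cinf D B"
    "\<forall>m V q r. open_dom m V \<and> smooth_map m n V W q \<and> D m V r \<and> r ` V \<subseteq> B
        \<longrightarrow> smooth_fun m V (\<lambda>v. Q (q v) (r v))"
    using W(6) unfolding Cinf_plot_def by simp_all
  define Q' where "Q' = (\<lambda>w. restrict (Q w) (A \<inter> B))"
  have "Cinf_plot DA (A \<inter> B) n W Q'"
    unfolding Cinf_plot_def
  proof (intro conjI allI impI)
    show "open_dom n W" by (rule W(1))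
    have "Q' w \<in> Cinf D (A \<inter> B)" if "w \<in> W" for w
      unfolding Q'_def using Cinf_restrict[OF diffeology, of "Q w" B "A \<inter> B"] Q(1) that by auto
    thus "Q' ` W \<subseteq> Cinf DA (A \<inter> B)"
      using Cinf_sub_diffeology[of "A \<inter> B" A D] by auto
    fix m V q r
    assume qr: "open_dom m V \<and> smooth_map m n V W q \<and> DA m V r \<and> r ` V \<subseteq> A \<inter> B"
    hence "D m V r" "r ` V \<subseteq> B"
      unfolding sub_diffeology_def by auto
    hence "smooth_fun m V (\<lambda>v. Q (q v) (r v))"
      using Q(2)[rule_format, of m V q r] qr by simp
    moreover have "\<forall>v\<in>V. Q (q v) (r v) = Q' (q v) (r v)"
      using qr unfolding Q'_def by auto
    ultimately show "smooth_fun m V (\<lambda>v. Q' (q v) (r v))"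
      using smooth_fun_cong[of m V "\<lambda>v. Q (q v) (r v)" "\<lambda>v. Q' (q v) (r v)"] qr by simp
  qed
  moreover have "(germ_restr \<circ> P) w = germ A DA x (A \<inter> B) (Q' w)" if w: "w \<in> W" for w
  proof -
    have "P w \<in> germs X D x"
      using P(2) W(3) w by blast
    hence "germ_restr (P w) = germ A DA x (A \<inter> B) (Q w)"
      using germ_restr_germ W(7) w by simp
    also have "\<dots> = germ A DA x (A \<inter> B) (Q' w)"
      by (rule germ_cong[OF D_open_subspace_Int[OF W(4)]]) (use base_point W(5) in \<open>auto simp: Q'_def\<close>)
    finally show ?thesis by simp
  qed
  ultimately show "\<exists>W B Q. open_dom n W \<and> u \<in> W \<and> W \<subseteq> U \<and> D_open A DA B \<and> x \<in> B \<and>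
      Cinf_plot DA B n W Q \<and> (\<forall>w\<in>W. (germ_restr \<circ> P) w = germ A DA x B (Q w))"
    using W(1-3,5) D_open_subspace_Int[OF W(4)] base_point by blast
qed

lemma germ_plot_germ_incl:
  assumes P: "germ_plot A DA x n U P"
  shows "germ_plot X D x n U (germ_incl \<circ> P)"
  unfolding germ_plot_def
proof (intro conjI ballI)
  have P: "open_dom n U" "P ` U \<subseteq> germs A DA x"
    "\<forall>u\<in>U. \<exists>W B Q. open_dom n W \<and> u \<in> W \<and> W \<subseteq> U \<and> D_open A DA B \<and> x \<in> B \<and>
        Cinf_plot DA B n W Q \<and> (\<forall>w\<in>W. P w = germ A DA x B (Q w))"
    using P unfolding germ_plot_def by simp_all
  show "open_dom n U" by (rule P(1))
  show "(germ_incl \<circ> P) ` U \<subseteq> germs X D x"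
    using P(2) germ_incl_in_germs by auto
  fix u
  assume "u \<in> U"
  then obtain W B Q where W: "open_dom n W" "u \<in> W" "W \<subseteq> U" "D_open A DA B" "x \<in> B"
    "Cinf_plot DA B n W Q" "\<forall>w\<in>W. P w = germ A DA x B (Q w)"
    using P(3) by blast
  have BA: "B \<subseteq> A"
    using D_open_subspace_subset[OF W(4)] .
  have Q: "Q ` W \<subseteq> Cinf DA B"
    "\<forall>m V q r. open_dom m V \<and> smooth_map m n V W q \<and> DA m V r \<and> r ` V \<subseteq> B
        \<longrightarrow> smooth_fun m V (\<lambda>v. Q (q v) (r v))"
    using W(6) unfolding Cinf_plot_def by simp_all
  have "Cinf_plot D B n W Q"
    unfolding Cinf_plot_def
  proof (intro conjI allI impI)
    show "open_dom n W" by (rule W(1))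
    show "Q ` W \<subseteq> Cinf D B"
      using Q(1) Cinf_sub_diffeology[OF BA, of D] by simp
    fix m V q r
    assume qr: "open_dom m V \<and> smooth_map m n V W q \<and> D m V r \<and> r ` V \<subseteq> B"
    hence "DA m V r"
      using BA unfolding sub_diffeology_def by auto
    thus "smooth_fun m V (\<lambda>v. Q (q v) (r v))"
      using Q(2)[rule_format, of m V q r] qr by simp
  qed
  moreover have "(germ_incl \<circ> P) w = germ X D x B (Q w)" if w: "w \<in> W" for w
  proof -
    have "P w \<in> germs A DA x"
      using P(2) W(3) w by blast
    thus ?thesis
      using germ_incl_germ W(7) w by simp
  qed
  ultimately show "\<exists>W B Q. open_dom n W \<and> u \<in> W \<and> W \<subseteq> U \<and> D_open X D B \<and> x \<in> B \<and>
      Cinf_plot D B n W Q \<and> (\<forall>w\<in>W. (germ_incl \<circ> P) w = germ X D x B (Q w))"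
    using W(1-3,5) D_open_subspaceD[OF W(4)] by blast
qed

lemma comp_germ_restr_in_ext_tangent:
  assumes F: "F \<in> ext_tangent A DA x"
  shows "F \<circ> germ_restr \<in> ext_tangent X D x"
proof (rule ext_tangentI)
  fix \<gamma>
  assume "\<gamma> \<notin> germs X D x"
  thus "(F \<circ> germ_restr) \<gamma> = 0"
    using germ_restr_notin ext_tangent_empty[OF F] by simp
next
  fix n U P
  assume "germ_plot X D x n U P"
  thus "smooth_fun n U (F \<circ> germ_restr \<circ> P)"
    using ext_tangent_germ_plotD[OF F germ_plot_germ_restr] by (simp add: o_assoc)
next
  fix B f g a b
  assume B: "D_open X D B" "x \<in> B" and fg: "f \<in> Cinf D B" "g \<in> Cinf D B"
  define f' where "f' = restrict f (A \<inter> B)"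
  define g' where "g' = restrict g (A \<inter> B)"
  have f'g': "f' \<in> Cinf DA (A \<inter> B)" "g' \<in> Cinf DA (A \<inter> B)"
    using Cinf_restrict[OF diffeology fg(1), of "A \<inter> B"] Cinf_restrict[OF diffeology fg(2), of "A \<inter> B"]
      Cinf_sub_diffeology[of "A \<inter> B" A D] unfolding f'_def g'_def by auto
  have x: "x \<in> A \<inter> B"
    using base_point B by simp
  have restr_eq: "germ A DA x (A \<inter> B) h = germ A DA x (A \<inter> B) h'"
    if "\<forall>y\<in>A \<inter> B. h y = h' y" for h h'
    by (rule germ_cong[OF D_open_subspace_Int[OF B(1)]]) (use that x in auto)
  have "germ A DA x (A \<inter> B) (\<lambda>y. a * f y + b * g y) = germ A DA x (A \<inter> B) (\<lambda>y. a * f' y + b * g' y)"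
    by (rule restr_eq) (simp add: f'_def g'_def)
  moreover have "germ A DA x (A \<inter> B) (\<lambda>y. f y * g y) = germ A DA x (A \<inter> B) (\<lambda>y. f' y * g' y)"
    by (rule restr_eq) (simp add: f'_def g'_def)
  moreover have "germ A DA x (A \<inter> B) f = germ A DA x (A \<inter> B) f'"
    by (rule restr_eq) (simp add: f'_def)
  moreover have "germ A DA x (A \<inter> B) g = germ A DA x (A \<inter> B) g'"
    by (rule restr_eq) (simp add: g'_def)
  moreover have "f' x = f x" "g' x = g x"
    using x unfolding f'_def g'_def by auto
  ultimately show "(F \<circ> germ_restr) (germ X D x B (\<lambda>y. a * f y + b * g y)) =
        a * (F \<circ> germ_restr) (germ X D x B f) + b * (F \<circ> germ_restr) (germ X D x B g) \<and>
        (F \<circ> germ_restr) (germ X D x B (\<lambda>y. f y * g y)) =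
        (F \<circ> germ_restr) (germ X D x B f) * g x + f x * (F \<circ> germ_restr) (germ X D x B g)"
    using ext_tangent_derivationD(1)[OF F D_open_subspace_Int[OF B(1)] x f'g', of a b]
      ext_tangent_derivationD(2)[OF F D_open_subspace_Int[OF B(1)] x f'g']
    by (simp add: ext_tangent_germ_restr[OF F B])
qed

lemma comp_germ_incl_in_ext_tangent:
  assumes G: "G \<in> ext_tangent X D x"
  shows "G \<circ> germ_incl \<in> ext_tangent A DA x"
proof (rule ext_tangentI)
  fix \<gamma>
  assume "\<gamma> \<notin> germs A DA x"
  thus "(G \<circ> germ_incl) \<gamma> = 0"
    using germ_incl_notin ext_tangent_empty[OF G] by simp
next
  fix n U P
  assume "germ_plot A DA x n U P"
  thus "smooth_fun n U (G \<circ> germ_incl \<circ> P)"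
    using ext_tangent_germ_plotD[OF G germ_plot_germ_incl] by (simp add: o_assoc)
next
  fix B f g a b
  assume B: "D_open A DA B" "x \<in> B" and fg: "f \<in> Cinf DA B" "g \<in> Cinf DA B"
  have fg': "f \<in> Cinf D B" "g \<in> Cinf D B"
    using fg Cinf_sub_diffeology[OF D_open_subspace_subset[OF B(1)], of D] by auto
  show "(G \<circ> germ_incl) (germ A DA x B (\<lambda>y. a * f y + b * g y)) =
        a * (G \<circ> germ_incl) (germ A DA x B f) + b * (G \<circ> germ_incl) (germ A DA x B g) \<and>
        (G \<circ> germ_incl) (germ A DA x B (\<lambda>y. f y * g y)) =
        (G \<circ> germ_incl) (germ A DA x B f) * g x + f x * (G \<circ> germ_incl) (germ A DA x B g)"
    using ext_tangent_derivationD(1)[OF G D_open_subspaceD[OF B(1)] B(2) fg', of a b]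
      ext_tangent_derivationD(2)[OF G D_open_subspaceD[OF B(1)] B(2) fg']
    by (simp add: ext_tangent_germ_incl[OF G B])
qed

lemma pushfwd_inclusion:
  assumes "F \<in> ext_tangent A DA x"
  shows "pushfwd A DA x X D id F = F \<circ> germ_restr"
proof
  fix \<gamma>
  show "pushfwd A DA x X D id F \<gamma> = (F \<circ> germ_restr) \<gamma>"
    using ext_tangent_empty[OF assms]
    by (cases "SOME p. p \<in> \<gamma>") (simp add: pushfwd_def germ_restr_def)
qed

lemma ext_tangent_comp_restr_incl:
  assumes "F \<in> ext_tangent A DA x"
  shows "F \<circ> germ_restr \<circ> germ_incl = F"
proof
  fix \<gamma>
  show "(F \<circ> germ_restr \<circ> germ_incl) \<gamma> = F \<gamma>"
    using germ_restr_incl germ_incl_notin germ_restr_notin[OF empty_notin_germs]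
      ext_tangent_empty[OF assms] ext_tangent_notin_germs[OF assms]
    by (cases "\<gamma> \<in> germs A DA x") auto
qed

lemma ext_tangent_comp_incl_restr:
  assumes "G \<in> ext_tangent X D x"
  shows "G \<circ> germ_incl \<circ> germ_restr = G"
proof
  fix \<gamma>
  show "(G \<circ> germ_incl \<circ> germ_restr) \<gamma> = G \<gamma>"
    using germ_incl_restr germ_restr_notin germ_incl_notin[OF empty_notin_germs]
      ext_tangent_empty[OF assms] ext_tangent_notin_germs[OF assms]
    by (cases "\<gamma> \<in> germs X D x") auto
qed

lemma bij_betw_pushfwd_inclusion:
  "bij_betw (pushfwd A DA x X D id) (ext_tangent A DA x) (ext_tangent X D x)"
proof (rule bij_betw_byWitness[where f' = "\<lambda>G. G \<circ> germ_incl"])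
  show "\<forall>F\<in>ext_tangent A DA x. pushfwd A DA x X D id F \<circ> germ_incl = F"
    by (simp add: pushfwd_inclusion ext_tangent_comp_restr_incl)
  show "\<forall>G\<in>ext_tangent X D x. pushfwd A DA x X D id (G \<circ> germ_incl) = G"
    by (simp add: pushfwd_inclusion comp_germ_incl_in_ext_tangent ext_tangent_comp_incl_restr)
  show "pushfwd A DA x X D id ` ext_tangent A DA x \<subseteq> ext_tangent X D x"
    by (auto simp: pushfwd_inclusion comp_germ_restr_in_ext_tangent)
  show "(\<lambda>G. G \<circ> germ_incl) ` ext_tangent X D x \<subseteq> ext_tangent A DA x"
    using comp_germ_incl_in_ext_tangent by auto
qed

end

theorem proposition3p12:
  fixes X :: "'a set" and D :: "'a plots" and A :: "'a set" and x :: 'a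
  assumes "diffeology X D" and "x \<in> X" and "D_open X D A" and "x \<in> A"
  shows "bij_betw (pushfwd A (sub_diffeology D A) x X D id)
           (ext_tangent A (sub_diffeology D A) x) (ext_tangent X D x)
       \<and> (\<forall>F\<in>ext_tangent A (sub_diffeology D A) x. \<forall>F'\<in>ext_tangent A (sub_diffeology D A) x.
            \<forall>a b. pushfwd A (sub_diffeology D A) x X D id (\<lambda>\<gamma>. a * F \<gamma> + b * F' \<gamma>)
              = (\<lambda>\<gamma>. a * pushfwd A (sub_diffeology D A) x X D id F \<gamma>
                      + b * pushfwd A (sub_diffeology D A) x X D id F' \<gamma>))"
proof -
  interpret D_open_subspace X D A x
    using assms by unfold_locales
  show ?thesis
    using bij_betw_pushfwd_inclusion by (simp add: pushfwd_linear)
qed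

end
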